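(* Let $\lambda\in\mathbb{C}^*$, $\eta\in\mathbb{C}$, $\sigma\in\mathbb{C}[X]$ with $\sigma\ne0$, and let $R$ be an irreducible restricted $\mathcal{G}$-module. Then: (1) $\Omega(\lambda,\eta,\sigma,0)\otimes R$ is an irreducible $\mathcal{G}$-module if and only if $\sigma$ is a nonzero constant; (2) $\Omega(\lambda,\eta,0,\sigma)\otimes R$ is an irreducible $\mathcal{G}$-module if and only if $\sigma$ is a nonzero constant.
   Context: $\mathcal{G}$ is the complex Lie algebra with basis $\{L_n,H_n,I_n,J_n,\mathbf{c}_1,\mathbf{c}_2,\mathbf{c}_3: n\in\mathbb{Z}\}$ whose brackets of basis elements are $[L_m,L_n]=(n-m)L_{m+n}+\frac{m^3-m}{12}\delta_{m+n,0}\mathbf{c}_1$, $[L_m,H_n]=nH_{m+n}+m^2\delta_{m+n,0}\mathbf{c}_2$, $[H_m,H_n]=m\delta_{m+n,0}\mathbf{c}_3$, $[L_m,I_n]=(n-m)I_{m+n}$, $[L_m,J_n]=(n-m)J_{m+n}$, $[H_m,I_n]=I_{m+n}$, $[H_m,J_n]=-J_{m+n}$ (and antisymmetric counterparts), all other brackets of basis elements zero. $\mathcal{G}=\bigoplus_{i\in\mathbb{Z}}\mathcal{G}^i$ is $\mathbb{Z}$-graded with $\mathcal{G}^i$ spanned by $L_i,H_i,I_i,J_i$ (and also $\mathbf{c}_1,\mathbf{c}_2,\mathbf{c}_3$ when $i=0$). A $\mathcal{G}$-module $R$ is restricted if for every $v\in R$ there is $N\in\mathbb{N}$ with $\mathcal{G}^iv=0$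 for all $i>N$. For $\lambda\in\mathbb{C}^*,\eta\in\mathbb{C}$, $0\ne\sigma\in\mathbb{C}[X]$: $\Omega(\lambda,\eta,\sigma,0)$ is $\mathbb{C}[X,Y]$ with $L_mf(X,Y)=\lambda^mf(X,Y-m)(Y-mX+m\eta)$, $H_mf=\lambda^mXf(X,Y-m)$, $I_mf=\lambda^m\sigma(X) f(X-1,Y-m)$, and $J_m,\mathbf{c}_1,\mathbf{c}_2,\mathbf{c}_3$ acting as $0$; $\Omega(\lambda,\eta,0,\sigma)$ is $\mathbb{C}[X,Y]$ with $L_mf=\lambda^mf(X,Y-m)(Y+mX+m\eta)$, $H_mf=\lambda^mXf(X,Y-m)$, $J_mf=\lambda^m\sigma(X)f(X+1,Y-m)$, and $I_m,\mathbf{c}_1,\mathbf{c}_2,\mathbf{c}_3$ acting as $0$ ($m\in\mathbb{Z}$). Tensor products carry the action $x(u\otimes v)=xu\otimes v+u\otimes xv$. *)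

theory Defs
  imports "HOL-Computational_Algebra.Polynomial" "HOL-Library.Function_Algebras"
begin

datatype gbasis = L int | H int | I int | J int | C1 | C2 | C3

fun br :: "gbasis \<Rightarrow> gbasis \<Rightarrow> (complex \<times> gbasis) list" where
  "br (L m) (L n) = [(of_int (n - m), L (m + n)),
                     (if m + n = 0 then of_int (m^3 - m) / 12 else 0, C1)]"
| "br (L m) (H n) = [(of_int n, H (m + n)), (if m + n = 0 then of_int (m^2) else 0, C2)]"
| "br (H n) (L m) = [(- of_int n, H (m + n)), (if m + n = 0 then - of_int (m^2) else 0, C2)]"
| "br (H m) (H n) = [(if m + n = 0 then of_int m else 0, C3)]"
| "br (L m) (I n) = [(of_int (n - m), I (m + n))]"
| "br (I n) (L m) = [(- of_int (n - m), I (m + n))]"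
| "br (L m) (J n) = [(of_int (n - m), J (m + n))]"
| "br (J n) (L m) = [(- of_int (n - m), J (m + n))]"
| "br (H m) (I n) = [(1, I (m + n))]"
| "br (I n) (H m) = [(-1, I (m + n))]"
| "br (H m) (J n) = [(-1, J (m + n))]"
| "br (J n) (H m) = [(1, J (m + n))]"
| "br _ _ = []"

fun gdeg :: "gbasis \<Rightarrow> int" where
  "gdeg (L n) = n" | "gdeg (H n) = n" | "gdeg (I n) = n" | "gdeg (J n) = n"
| "gdeg C1 = 0" | "gdeg C2 = 0" | "gdeg C3 = 0"

definition subspace_in :: "(complex \<Rightarrow> 'v::ab_group_add \<Rightarrow> 'v) \<Rightarrow> 'v set \<Rightarrow> bool" where
  "subspace_in s N \<longleftrightarrow> 0 \<in> N \<and> (\<forall>u\<in>N. \<forall>v\<in>N. u + v \<in> N) \<and> (\<forall>c. \<forall>u\<in>N. s c u \<in> N)"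

definition gmodule_on :: "(complex \<Rightarrow> 'v::ab_group_add \<Rightarrow> 'v) \<Rightarrow> 'v set \<Rightarrow> (gbasis \<Rightarrow> 'v \<Rightarrow> 'v) \<Rightarrow> bool" where
  "gmodule_on s M \<rho> \<longleftrightarrow> subspace_in s M \<and>
     (\<forall>x. \<forall>v\<in>M. \<rho> x v \<in> M) \<and>
     (\<forall>x. \<forall>u\<in>M. \<forall>v\<in>M. \<rho> x (u + v) = \<rho> x u + \<rho> x v) \<and>
     (\<forall>x c. \<forall>u\<in>M. \<rho> x (s c u) = s c (\<rho> x u)) \<and>
     (\<forall>x y. \<forall>v\<in>M. \<rho> x (\<rho> y v) - \<rho> y (\<rho> x v) = (\<Sum>(c, z)\<leftarrow>br x y. s c (\<rho> z v)))"

definition irreducible_gmod :: "(complex \<Rightarrow> 'v::ab_group_add \<Rightarrow> 'v) \<Rightarrow> 'v set \<Rightarrow> (gbasis \<Rightarrow> 'v \<Rightarrow> 'v) \<Rightarrow> bool" where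
  "irreducible_gmod s M \<rho> \<longleftrightarrow> gmodule_on s M \<rho> \<and> M \<noteq> {0} \<and>
     (\<forall>N. N \<subseteq> M \<and> subspace_in s N \<and> (\<forall>x. \<forall>v\<in>N. \<rho> x v \<in> N) \<longrightarrow> N = {0} \<or> N = M)"

definition restricted_gmod :: "'v::zero set \<Rightarrow> (gbasis \<Rightarrow> 'v \<Rightarrow> 'v) \<Rightarrow> bool" where
  "restricted_gmod M \<rho> \<longleftrightarrow> (\<forall>v\<in>M. \<exists>N::nat. \<forall>x. gdeg x > int N \<longrightarrow> \<rho> x v = 0)"

text \<open>C[X,Y] is represented as complex poly poly: polynomials in Y whose
  coefficients are polynomials in X.\<close>
definition polyX :: "complex poly poly" where "polyX = [:[:0, 1:]:]"

definition shiftY :: "int \<Rightarrow> complex poly poly \<Rightarrow> complex poly poly"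
  where "shiftY m f = pcompose f [:[:- of_int m:], 1:]"

definition shiftX :: "complex \<Rightarrow> complex poly poly \<Rightarrow> complex poly poly"
  where "shiftX a f = map_poly (\<lambda>c. pcompose c [:a, 1:]) f"

definition cst :: "complex \<Rightarrow> complex poly poly" where "cst a = [:[:a:]:]"

text \<open>Omega(lam, eta, sig, 0).\<close>
fun omegaI :: "complex \<Rightarrow> complex \<Rightarrow> complex poly \<Rightarrow> gbasis \<Rightarrow> complex poly poly \<Rightarrow> complex poly poly" where
  "omegaI lam eta sig (L m) f = cst (lam powi m) * shiftY m f * [:[:of_int m * eta, - of_int m:], 1:]"
| "omegaI lam eta sig (H m) f = cst (lam powi m) * polyX * shiftY m f"
| "omegaI lam eta sig (I m) f = cst (lam powi m) * [:sig:] * shiftX (-1) (shiftY m f)"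
| "omegaI lam eta sig _ f = 0"

text \<open>Omega(lam, eta, 0, sig).\<close>
fun omegaJ :: "complex \<Rightarrow> complex \<Rightarrow> complex poly \<Rightarrow> gbasis \<Rightarrow> complex poly poly \<Rightarrow> complex poly poly" where
  "omegaJ lam eta sig (L m) f = cst (lam powi m) * shiftY m f * [:[:of_int m * eta, of_int m:], 1:]"
| "omegaJ lam eta sig (H m) f = cst (lam powi m) * polyX * shiftY m f"
| "omegaJ lam eta sig (J m) f = cst (lam powi m) * [:sig:] * shiftX 1 (shiftY m f)"
| "omegaJ lam eta sig _ f = 0"

text \<open>Tensor product C[X,Y] \<otimes> R realised as finitely supported functions
  F : nat \<times> nat \<Rightarrow> R, F = \<Sum> X^a Y^b \<otimes> F(a,b).\<close>
definition tcarrier :: "(nat \<times> nat \<Rightarrow> 'v::zero) set" where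
  "tcarrier = {F. finite {k. F k \<noteq> 0}}"

definition tscale :: "(complex \<Rightarrow> 'v \<Rightarrow> 'v) \<Rightarrow> complex \<Rightarrow> (nat \<times> nat \<Rightarrow> 'v) \<Rightarrow> (nat \<times> nat \<Rightarrow> 'v)" where
  "tscale s c F = (\<lambda>k. s c (F k))"

definition xymonom :: "nat \<times> nat \<Rightarrow> complex poly poly"
  where "xymonom k = monom (monom 1 (fst k)) (snd k)"

definition xycoeff :: "complex poly poly \<Rightarrow> nat \<times> nat \<Rightarrow> complex"
  where "xycoeff p k = coeff (coeff p (snd k)) (fst k)"

text \<open>Action x(u \<otimes> v) = xu \<otimes> v + u \<otimes> xv on the tensor product.\<close>
definition tens_act :: "(complex \<Rightarrow> 'v::ab_group_add \<Rightarrow> 'v) \<Rightarrow> (gbasis \<Rightarrow> complex poly poly \<Rightarrow> complex poly poly)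
     \<Rightarrow> (gbasis \<Rightarrow> 'v \<Rightarrow> 'v) \<Rightarrow> gbasis \<Rightarrow> (nat \<times> nat \<Rightarrow> 'v) \<Rightarrow> (nat \<times> nat \<Rightarrow> 'v)" where
  "tens_act s A B x F = (\<lambda>j. (\<Sum>k\<in>{k. F k \<noteq> 0}. s (xycoeff (A x (xymonom k)) j) (F k)) + B x (F j))"

end

theory Submission
  imports Defs "HOL-Computational_Algebra.Fundamental_Theorem_Algebra"
begin

(*
  Let N be a nonzero submodule of C[X,Y] \<otimes> R. An element of N can be written as
  \<Sum> f_b \<otimes> b with the b linearly independent, and since R is restricted all b are killed
  by the basis elements of degree > K for some K. If sig = c is a nonzero constant, then for
  m > K the operator I_m (resp. J_m) acts on such elements as c lam^m times the shift
  f(X, Y) \<mapsto> f(X - 1, Y - m) (resp. f(X + 1, Y - m)). The difference of the shifts for m + 1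
  and m lowers the Y-degree, and on polynomials in X alone the shift minus the identity lowers
  the X-degree; iterating these forward differences turns all f_b into constants, not all zero,
  so 1 \<otimes> v \<in> N for some v \<noteq> 0. The operators H_m and L_m of large degree then give
  f \<otimes> v \<in> N for every f, so {v. 1 \<otimes> v \<in> N} is a nonzero submodule of R, hence all of R,
  and N is everything.
  If sig is not a nonzero constant, the image of multiplication by sig in the first factor is a
  submodule, because every operator maps sig C[X,Y] into itself. It is nonzero, and it misses
  1 \<otimes> v, because evaluating the first factor at Y = 0 and at a root of sig kills it.
*)

section \<open>Bivariate polynomials\<close>

type_synonym poly2 = "complex poly poly"

definition polyY :: poly2 where "polyY = [:0, 1:]"

lemma cst_add: "cst (a + b) = cst a + cst b" by (simp add: cst_def)
lemma cst_diff: "cst (a - b) = cst a - cst b" by (simp add: cst_def)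
lemma cst_minus: "cst (- a) = - cst a" by (simp add: cst_def)
lemma cst_mult: "cst (a * b) = cst a * cst b" by (simp add: cst_def)
lemma cst_0 [simp]: "cst 0 = 0" by (simp add: cst_def)
lemma cst_1 [simp]: "cst 1 = 1" by (simp add: cst_def one_pCons)
lemma cst_of_int: "cst (of_int n) = of_int n" by (simp add: cst_def of_int_poly)

lemma coeff_shiftX: "coeff (shiftX a f) n = pcompose (coeff f n) [:a, 1:]"
  unfolding shiftX_def by (simp add: coeff_map_poly)

lemma shiftX_add: "shiftX a (f + g) = shiftX a f + shiftX a g"
  by (rule poly_eqI) (simp add: coeff_shiftX pcompose_add)
lemma shiftX_diff: "shiftX a (f - g) = shiftX a f - shiftX a g"
  by (rule poly_eqI) (simp add: coeff_shiftX pcompose_diff)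
lemma shiftX_0 [simp]: "shiftX a 0 = 0"
  by (simp add: shiftX_def)
lemma shiftX_mult: "shiftX a (f * g) = shiftX a f * shiftX a g"
  by (rule poly_eqI) (simp add: coeff_shiftX coeff_mult pcompose_sum pcompose_mult)
lemma shiftX_const: "shiftX a [:p:] = [:pcompose p [:a, 1:]:]"
  unfolding shiftX_def by (simp add: map_poly_pCons)
lemma shiftX_cst [simp]: "shiftX a (cst c) = cst c"
  by (simp add: cst_def shiftX_const)
lemma shiftX_polyY [simp]: "shiftX a polyY = polyY"
  unfolding shiftX_def polyY_def by (simp add: map_poly_pCons pcompose_1)
lemma shiftX_polyX: "shiftX a polyX = polyX + cst a"
  unfolding polyX_def cst_def by (simp add: shiftX_const pcompose_pCons)
lemma shiftX_pCons: "shiftX a (pCons c f) = pCons (pcompose c [:a, 1:]) (shiftX a f)"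
  unfolding shiftX_def by (simp add: map_poly_pCons)
lemma shiftX_pcompose: "shiftX a (pcompose f g) = pcompose (shiftX a f) (shiftX a g)"
  by (induction f) (simp_all add: pcompose_pCons shiftX_add shiftX_mult shiftX_const shiftX_pCons)
lemma shiftX_shiftX: "shiftX a (shiftX b f) = shiftX (a + b) f"
  by (rule poly_eqI) (simp add: coeff_shiftX pcompose_assoc[symmetric] pcompose_pCons algebra_simps)
lemma shiftX_by_0 [simp]: "shiftX 0 f = f"
  by (rule poly_eqI) (simp add: coeff_shiftX)
lemma shiftX_eq_0_iff [simp]: "shiftX a f = 0 \<longleftrightarrow> f = 0"
proof
  assume "shiftX a f = 0"
  then have "shiftX (- a) (shiftX a f) = 0" by simp
  then show "f = 0" by (simp add: shiftX_shiftX)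
qed simp
lemma degree_shiftX [simp]: "degree (shiftX a f) = degree f"
  unfolding shiftX_def by (rule degree_map_poly) (simp add: pcompose_eq_0_iff)
lemma smult_as_mult: "smult c p = [:c:] * p"
  by simp
lemma shiftX_smult: "shiftX a (smult c g) = smult (pcompose c [:a, 1:]) (shiftX a g)"
  by (simp only: smult_as_mult shiftX_mult shiftX_const)

lemma shiftY_add: "shiftY m (f + g) = shiftY m f + shiftY m g"
  by (simp add: shiftY_def pcompose_add)
lemma shiftY_diff: "shiftY m (f - g) = shiftY m f - shiftY m g"
  by (simp add: shiftY_def pcompose_diff)
lemma shiftY_mult: "shiftY m (f * g) = shiftY m f * shiftY m g"
  by (simp add: shiftY_def pcompose_mult)
lemma shiftY_smult: "shiftY m (smult c g) = smult c (shiftY m g)"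
  by (simp add: shiftY_def pcompose_smult)
lemma shiftY_const [simp]: "shiftY m [:p:] = [:p:]"
  by (simp add: shiftY_def)
lemma shiftY_cst [simp]: "shiftY m (cst c) = cst c"
  by (simp add: cst_def)
lemma shiftY_polyX [simp]: "shiftY m polyX = polyX"
  by (simp add: polyX_def)
lemma shiftY_polyY: "shiftY m polyY = polyY - cst (of_int m)"
  by (simp add: shiftY_def polyY_def cst_def pcompose_pCons)
lemma shiftY_shiftY: "shiftY m (shiftY n f) = shiftY (m + n) f"
  unfolding shiftY_def pcompose_assoc[symmetric] by (simp add: pcompose_pCons algebra_simps)
lemma degree_shiftY [simp]: "degree (shiftY m f) = degree f"
  by (simp add: shiftY_def degree_pcompose)
lemma shiftY_eq_0_iff [simp]: "shiftY m f = 0 \<longleftrightarrow> f = 0"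
  by (simp add: shiftY_def pcompose_eq_0_iff)
lemma shiftX_shiftY: "shiftX a (shiftY m f) = shiftY m (shiftX a f)"
  by (simp add: shiftY_def shiftX_pcompose shiftX_pCons shiftX_const pcompose_1)
lemma shiftY_of_int [simp]: "shiftY m (of_int n) = of_int n"
  by (metis cst_of_int shiftY_cst)
lemma shiftX_of_int [simp]: "shiftX a (of_int n) = of_int n"
  by (metis cst_of_int shiftX_cst)

lemma degree_0_imp_cst:
  assumes "degree f = 0" "degree (coeff f 0) = 0"
  shows "\<exists>a. f = cst a"
proof -
  obtain p where f: "f = [:p:]" using assms(1) by (rule degree_eq_zeroE)
  then have "degree p = 0" using assms(2) by simp
  then obtain a where "p = [:a:]" by (rule degree_eq_zeroE)
  with f show ?thesis by (auto simp: cst_def)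
qed

section \<open>The modules \<open>\<Omega>(lam, eta, sig, 0)\<close> and \<open>\<Omega>(lam, eta, 0, sig)\<close>\<close>

definition poly2_linear :: "(poly2 \<Rightarrow> poly2) \<Rightarrow> bool" where
  "poly2_linear P \<longleftrightarrow> (\<forall>f g. P (f + g) = P f + P g) \<and> (\<forall>c f. P (cst c * f) = cst c * P f)"

lemma poly2_linear_comp: "poly2_linear P \<Longrightarrow> poly2_linear Q \<Longrightarrow> poly2_linear (\<lambda>f. P (Q f))"
  by (simp add: poly2_linear_def)
lemma poly2_linear_diff: "poly2_linear P \<Longrightarrow> poly2_linear Q \<Longrightarrow> poly2_linear (\<lambda>f. P f - Q f)"
  by (simp add: poly2_linear_def algebra_simps)
lemma poly2_linear_mult_left: "poly2_linear (\<lambda>f. p * f)"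
  by (simp add: poly2_linear_def algebra_simps)
lemma poly2_linear_shifts: "poly2_linear (\<lambda>f. cst c * shiftX a (shiftY m f))"
  by (simp add: poly2_linear_def shiftY_add shiftY_mult shiftX_add shiftX_mult algebra_simps)
lemma poly2_linear_sum:
  assumes "poly2_linear P" shows "P (sum f S) = (\<Sum>i\<in>S. P (f i))"
proof -
  have "P 0 = 0" using assms unfolding poly2_linear_def by (metis cst_0 mult_zero_left)
  then show ?thesis
    using assms by (induction S rule: infinite_finite_induct) (simp_all add: poly2_linear_def)
qed

lemma poly2_linear_omegaI: "poly2_linear (omegaI lam eta sig x)"
  by (cases x) (simp_all add: poly2_linear_def shiftY_add shiftY_mult shiftX_add shiftX_mult algebra_simps)
lemma poly2_linear_omegaJ: "poly2_linear (omegaJ lam eta sig x)"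
  by (cases x) (simp_all add: poly2_linear_def shiftY_add shiftY_mult shiftX_add shiftX_mult algebra_simps)

lemma omegaI_L_polyY:
  "omegaI lam eta sig (L m) f = cst (lam powi m) * shiftY m f * (polyY + cst (of_int m * eta) - cst (of_int m) * polyX)"
  by (simp add: polyY_def cst_def polyX_def)
lemma omegaJ_L_polyY:
  "omegaJ lam eta sig (L m) f = cst (lam powi m) * shiftY m f * (polyY + cst (of_int m * eta) + cst (of_int m) * polyX)"
  by (simp add: polyY_def cst_def polyX_def)

lemmas shift_simps = shiftY_add shiftY_diff shiftY_mult shiftY_polyY shiftY_shiftY shiftX_add shiftX_diff
  shiftX_mult shiftX_polyX shiftX_shiftX shiftX_shiftY[symmetric] shiftX_const cst_add cst_diff cst_mult
  cst_of_int cst_minus shiftY_smult shiftX_smult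

lemma omegaI_bracket:
  assumes "lam \<noteq> 0"
  shows "omegaI lam eta sig x (omegaI lam eta sig y f) - omegaI lam eta sig y (omegaI lam eta sig x f)
     = (\<Sum>(c, z)\<leftarrow>br x y. cst c * omegaI lam eta sig z f)"
  apply (cases x; cases y)
  apply (simp_all only: omegaI_L_polyY omegaI.simps br.simps list.map sum_list.Cons sum_list.Nil prod.case)
  apply (simp_all add: shift_simps power_int_add assms pcompose_pCons)
  apply (simp_all only: add.commute[of "_::int"] smult_as_mult)
  apply (simp_all add: algebra_simps)
  done

lemma omegaJ_bracket:
  assumes "lam \<noteq> 0"
  shows "omegaJ lam eta sig x (omegaJ lam eta sig y f) - omegaJ lam eta sig y (omegaJ lam eta sig x f)
     = (\<Sum>(c, z)\<leftarrow>br x y. cst c * omegaJ lam eta sig z f)"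
  apply (cases x; cases y)
  apply (simp_all only: omegaJ_L_polyY omegaJ.simps br.simps list.map sum_list.Cons sum_list.Nil prod.case)
  apply (simp_all add: shift_simps power_int_add assms pcompose_pCons)
  apply (simp_all only: add.commute[of "_::int"] smult_as_mult)
  apply (simp_all add: algebra_simps)
  done

lemma omegaI_sig_multiple:
  "\<exists>Q. poly2_linear Q \<and> (\<forall>f. omegaI lam eta sig x ([:sig:] * f) = [:sig:] * Q f)"
proof (cases "\<exists>m. x = I m")
  case True
  then obtain m where x: "x = I m" by blast
  show ?thesis
    using poly2_linear_comp[OF poly2_linear_shifts poly2_linear_mult_left, of "lam powi m" "-1" m "[:sig:]"]
    by (intro exI[of _ "\<lambda>f. cst (lam powi m) * shiftX (-1) (shiftY m ([:sig:] * f))"]) (simp add: x mult_ac)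
next
  case False
  then have "omegaI lam eta sig x ([:sig:] * f) = [:sig:] * omegaI lam eta sig x f" for f
    by (cases x) (auto simp only: omegaI.simps shiftY_mult shiftY_const mult_zero_left mult_zero_right mult_ac)
  then show ?thesis using poly2_linear_omegaI by blast
qed

lemma omegaJ_sig_multiple:
  "\<exists>Q. poly2_linear Q \<and> (\<forall>f. omegaJ lam eta sig x ([:sig:] * f) = [:sig:] * Q f)"
proof (cases "\<exists>m. x = J m")
  case True
  then obtain m where x: "x = J m" by blast
  show ?thesis
    using poly2_linear_comp[OF poly2_linear_shifts poly2_linear_mult_left, of "lam powi m" "1" m "[:sig:]"]
    by (intro exI[of _ "\<lambda>f. cst (lam powi m) * shiftX 1 (shiftY m ([:sig:] * f))"]) (simp add: x mult_ac)
next
  case False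
  then have "omegaJ lam eta sig x ([:sig:] * f) = [:sig:] * omegaJ lam eta sig x f" for f
    by (cases x) (auto simp only: omegaJ.simps shiftY_mult shiftY_const mult_zero_left mult_zero_right mult_ac)
  then show ?thesis using poly2_linear_omegaJ by blast
qed

section \<open>Tensor product with a vector space\<close>

lemma coeff_cst_mult: "coeff (cst c * f) n = smult c (coeff f n)"
  by (simp add: cst_def)

lemma xycoeff_add: "xycoeff (f + g) j = xycoeff f j + xycoeff g j"
  by (simp add: xycoeff_def)
lemma xycoeff_diff: "xycoeff (f - g) j = xycoeff f j - xycoeff g j"
  by (simp add: xycoeff_def)
lemma xycoeff_0 [simp]: "xycoeff 0 j = 0"
  by (simp add: xycoeff_def)
lemma xycoeff_cst_mult: "xycoeff (cst c * f) j = c * xycoeff f j"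
  by (simp add: xycoeff_def cst_def)
lemma xycoeff_sum: "xycoeff (sum f S) j = (\<Sum>i\<in>S. xycoeff (f i) j)"
  by (induction S rule: infinite_finite_induct) (auto simp: xycoeff_add)
lemma xycoeff_xymonom: "xycoeff (xymonom k) j = (if k = j then 1 else 0)"
  by (cases k; cases j) (auto simp: xycoeff_def xymonom_def coeff_monom)
lemma xycoeff_cst: "xycoeff (cst c) j = (if j = (0, 0) then c else 0)"
  by (cases j) (auto simp: xycoeff_def cst_def coeff_pCons split: nat.splits)
lemma xycoeff_one: "xycoeff 1 j = (if j = (0, 0) then 1 else 0)"
  using xycoeff_cst[of 1 j] by simp
lemma poly2_eq_iff_xycoeff: "f = g \<longleftrightarrow> (\<forall>j. xycoeff f j = xycoeff g j)"
  by (auto simp: xycoeff_def poly_eq_iff)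

lemma finite_xycoeff: "finite {j. xycoeff f j \<noteq> 0}"
proof -
  have "{j. xycoeff f j \<noteq> 0} \<subseteq> (\<lambda>(b, a). (a, b)) ` (SIGMA b:{..degree f}. {..degree (coeff f b)})"
  proof
    fix j assume "j \<in> {j. xycoeff f j \<noteq> 0}"
    then obtain a b where j: "j = (a, b)" and c: "coeff (coeff f b) a \<noteq> 0"
      by (cases j) (auto simp: xycoeff_def)
    then have "b \<le> degree f" "a \<le> degree (coeff f b)"
      by (auto intro: le_degree)
    then show "j \<in> (\<lambda>(b, a). (a, b)) ` (SIGMA b:{..degree f}. {..degree (coeff f b)})"
      using j by (auto intro!: image_eqI[of _ _ "(b, a)"])
  qed
  then show ?thesis by (rule finite_subset) auto
qed

lemma poly2_expansion:
  assumes "finite S" "{j. xycoeff f j \<noteq> 0} \<subseteq> S"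
  shows "f = (\<Sum>k\<in>S. cst (xycoeff f k) * xymonom k)"
proof -
  have "xycoeff (\<Sum>k\<in>S. cst (xycoeff f k) * xymonom k) j = xycoeff f j" for j
    using assms by (auto simp: xycoeff_sum xycoeff_cst_mult xycoeff_xymonom if_distrib cong: if_cong)
  then show ?thesis by (simp add: poly2_eq_iff_xycoeff)
qed

lemma fun_sum_apply: "(sum F S) j = (\<Sum>i\<in>S. F i j)"
  by (induction S rule: infinite_finite_induct) auto

text \<open>In the coordinates of \<open>tcarrier\<close>, \<open>tensor s f v\<close> is \<open>f \<otimes> v\<close>,
  \<open>tensor_left s P\<close> is \<open>P \<otimes> id\<close> and \<open>tensor_right r\<close> is \<open>id \<otimes> r\<close>.\<close>

definition tensor :: "(complex \<Rightarrow> 'v::zero \<Rightarrow> 'v) \<Rightarrow> poly2 \<Rightarrow> 'v \<Rightarrow> nat \<times> nat \<Rightarrow> 'v" where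
  "tensor s f v = (\<lambda>j. s (xycoeff f j) v)"

definition tensor_left :: "(complex \<Rightarrow> 'v::ab_group_add \<Rightarrow> 'v) \<Rightarrow> (poly2 \<Rightarrow> poly2)
    \<Rightarrow> (nat \<times> nat \<Rightarrow> 'v) \<Rightarrow> nat \<times> nat \<Rightarrow> 'v" where
  "tensor_left s P F = (\<lambda>j. \<Sum>k\<in>{k. F k \<noteq> 0}. s (xycoeff (P (xymonom k)) j) (F k))"

definition tensor_right :: "('v \<Rightarrow> 'v) \<Rightarrow> (nat \<times> nat \<Rightarrow> 'v) \<Rightarrow> nat \<times> nat \<Rightarrow> 'v" where
  "tensor_right r F = (\<lambda>j. r (F j))"

locale cvector_space = vector_space scale for scale :: "complex \<Rightarrow> 'v::ab_group_add \<Rightarrow> 'v"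
begin

lemma tcarrier_zero: "(0 :: nat \<times> nat \<Rightarrow> 'v) \<in> tcarrier"
  by (simp add: tcarrier_def)

lemma tcarrier_add:
  fixes F G :: "nat \<times> nat \<Rightarrow> 'v"
  assumes "F \<in> tcarrier" "G \<in> tcarrier" shows "F + G \<in> tcarrier"
proof -
  have "{k. (F + G) k \<noteq> 0} \<subseteq> {k. F k \<noteq> 0} \<union> {k. G k \<noteq> 0}" by auto
  moreover have "finite ({k. F k \<noteq> 0} \<union> {k. G k \<noteq> 0})" using assms by (simp add: tcarrier_def)
  ultimately show ?thesis unfolding tcarrier_def using finite_subset by blast
qed

lemma tcarrier_mono:
  assumes "F \<in> tcarrier" "\<And>k. F k = 0 \<Longrightarrow> G k = 0" shows "G \<in> tcarrier"
proof -
  have "{k. G k \<noteq> 0} \<subseteq> {k. F k \<noteq> 0}" using assms(2) by blast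
  then show ?thesis using assms(1) unfolding tcarrier_def using finite_subset by blast
qed

lemma tcarrier_tscale: "F \<in> tcarrier \<Longrightarrow> tscale scale c F \<in> tcarrier"
  by (erule tcarrier_mono) (simp add: tscale_def)

lemma tcarrier_sum:
  fixes G :: "'i \<Rightarrow> nat \<times> nat \<Rightarrow> 'v"
  shows "(\<And>i. i \<in> S \<Longrightarrow> G i \<in> tcarrier) \<Longrightarrow> sum G S \<in> tcarrier"
  by (induction S rule: infinite_finite_induct) (auto simp: tcarrier_zero tcarrier_add)

lemma tcarrier_subspace: "subspace_in (tscale scale) tcarrier"
  unfolding subspace_in_def using tcarrier_zero tcarrier_add tcarrier_tscale by blast

lemma tscale_minus_one: "tscale scale (-1) F = - F"
  by (simp add: tscale_def fun_eq_iff)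

lemma tscale_add: "tscale scale c (F + G) = tscale scale c F + tscale scale c G"
  by (simp add: tscale_def fun_eq_iff scale_right_distrib)

lemma tensor_in_tcarrier: "tensor scale f v \<in> tcarrier"
proof -
  have "{k. tensor scale f v k \<noteq> 0} \<subseteq> {j. xycoeff f j \<noteq> 0}"
    by (auto simp: tensor_def)
  then show ?thesis unfolding tcarrier_def using finite_subset finite_xycoeff by blast
qed

lemma tensor_add_left: "tensor scale (f + g) v = tensor scale f v + tensor scale g v"
  by (simp add: tensor_def fun_eq_iff xycoeff_add scale_left_distrib)
lemma tensor_add_right: "tensor scale f (u + v) = tensor scale f u + tensor scale f v"
  by (simp add: tensor_def fun_eq_iff scale_right_distrib)
lemma tensor_diff_left: "tensor scale (f - g) v = tensor scale f v - tensor scale g v"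
  by (simp add: tensor_def fun_eq_iff xycoeff_diff scale_left_diff_distrib)
lemma tensor_cst_mult_left: "tensor scale (cst c * f) v = tscale scale c (tensor scale f v)"
  unfolding tensor_def tscale_def xycoeff_cst_mult by (simp add: fun_eq_iff mult.commute)
lemma tensor_scale_right: "tensor scale f (scale c v) = tscale scale c (tensor scale f v)"
  by (simp add: tensor_def fun_eq_iff tscale_def mult.commute)
lemma tensor_zero_left [simp]: "tensor scale 0 v = 0"
  by (simp add: tensor_def fun_eq_iff)
lemma tensor_zero_right [simp]: "tensor scale f 0 = 0"
  by (simp add: tensor_def fun_eq_iff)
lemma tensor_sum_right: "tensor scale f (sum g S) = (\<Sum>i\<in>S. tensor scale f (g i))"
  by (induction S rule: infinite_finite_induct) (auto simp: tensor_add_right)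
lemma tensor_cst: "tensor scale (cst c) v = tensor scale 1 (scale c v)"
  by (simp add: tensor_def fun_eq_iff xycoeff_cst flip: cst_1)

lemma tensor_one_eq_0_iff [simp]: "tensor scale 1 v = 0 \<longleftrightarrow> v = 0"
proof
  assume "tensor scale 1 v = 0"
  then have "tensor scale 1 v (0, 0) = 0" by simp
  then show "v = 0" by (simp add: tensor_def xycoeff_one)
qed simp

lemma tcarrier_eq_sum_tensors:
  assumes "F \<in> tcarrier"
  shows "F = (\<Sum>k\<in>{k. F k \<noteq> 0}. tensor scale (xymonom k) (F k))"
proof
  fix j
  have "finite {k. F k \<noteq> 0}" using assms by (simp add: tcarrier_def)
  then show "F j = (\<Sum>k\<in>{k. F k \<noteq> 0}. tensor scale (xymonom k) (F k)) j"
    by (simp add: fun_sum_apply tensor_def xycoeff_xymonom if_distrib[of "\<lambda>c. scale c _"]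
        sum.delta' cong: if_cong)
qed

lemma tensor_decomposition:
  assumes "F \<in> tcarrier"
  obtains B f where "finite B" "independent B" "F = (\<Sum>b\<in>B. tensor scale (f b) b)"
proof -
  let ?S = "{k. F k \<noteq> 0}"
  have finS: "finite ?S" using assms by (simp add: tcarrier_def)
  obtain B where B: "B \<subseteq> span (F ` ?S)" "independent B" "span (F ` ?S) \<subseteq> span B"
    by (rule basis_exists[of "span (F ` ?S)"]) (simp add: span_span)
  have finB: "finite B" using independent_span_bound[OF _ B(2)] B(1) finS by blast
  have "F k \<in> span B" for k
    using B(3) by (cases "F k = 0") (auto simp: span_zero intro: span_base)
  then have "\<forall>k. \<exists>w. F k = (\<Sum>b\<in>B. scale (w b) b)"
    using span_finite[OF finB] by auto
  then obtain u where u: "\<And>k. F k = (\<Sum>b\<in>B. scale (u k b) b)"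
    by metis
  define f where "f b = (\<Sum>k\<in>?S. cst (u k b) * xymonom k)" for b
  have "xycoeff (f b) j = (if j \<in> ?S then u j b else 0)" for b j
    using finS by (simp add: f_def xycoeff_sum xycoeff_cst_mult xycoeff_xymonom if_distrib sum.delta
        cong: if_cong)
  then have "F j = (\<Sum>b\<in>B. tensor scale (f b) b) j" for j
    by (cases "F j = 0") (simp_all add: fun_sum_apply tensor_def u[of j, symmetric])
  then have "F = (\<Sum>b\<in>B. tensor scale (f b) b)" ..
  with finB B(2) that show ?thesis by blast
qed

lemma tensor_left_eq_sum:
  assumes "finite S" "{k. F k \<noteq> 0} \<subseteq> S"
  shows "tensor_left scale P F j = (\<Sum>k\<in>S. scale (xycoeff (P (xymonom k)) j) (F k))"
  unfolding tensor_left_def by (rule sum.mono_neutral_left[OF assms]) auto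

lemma tensor_left_eq_sum_tensors:
  "tensor_left scale P F = (\<Sum>k\<in>{k. F k \<noteq> 0}. tensor scale (P (xymonom k)) (F k))"
  by (simp add: fun_eq_iff tensor_left_def fun_sum_apply tensor_def)

lemma tensor_left_in_tcarrier: "tensor_left scale P F \<in> tcarrier"
  unfolding tensor_left_eq_sum_tensors by (rule tcarrier_sum) (rule tensor_in_tcarrier)

lemma tensor_left_zero [simp]: "tensor_left scale P 0 = 0"
  by (simp add: tensor_left_def fun_eq_iff)

lemma tensor_left_add:
  assumes "F \<in> tcarrier" "G \<in> tcarrier"
  shows "tensor_left scale P (F + G) = tensor_left scale P F + tensor_left scale P G"
proof -
  let ?S = "{k. F k \<noteq> 0} \<union> {k. G k \<noteq> 0}"
  have fin: "finite ?S" using assms by (simp add: tcarrier_def)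
  have "{k. (F + G) k \<noteq> 0} \<subseteq> ?S" "{k. F k \<noteq> 0} \<subseteq> ?S" "{k. G k \<noteq> 0} \<subseteq> ?S" by auto
  then show ?thesis
    by (simp add: fun_eq_iff tensor_left_eq_sum[OF fin] scale_right_distrib sum.distrib)
qed

lemma tensor_left_tscale:
  assumes "F \<in> tcarrier"
  shows "tensor_left scale P (tscale scale c F) = tscale scale c (tensor_left scale P F)"
proof -
  have "finite {k. F k \<noteq> 0}" using assms by (simp add: tcarrier_def)
  then show ?thesis
    by (simp add: fun_eq_iff tensor_left_eq_sum[of "{k. F k \<noteq> 0}"] tscale_def scale_sum_right
        subset_iff mult.commute)
qed

lemma tensor_left_sum:
  "(\<And>i. i \<in> S \<Longrightarrow> G i \<in> tcarrier) \<Longrightarrow> tensor_left scale P (sum G S) = (\<Sum>i\<in>S. tensor_left scale P (G i))"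
  by (induction S rule: infinite_finite_induct) (auto simp: tensor_left_add tcarrier_sum)

lemma tensor_left_tensor:
  assumes "poly2_linear P"
  shows "tensor_left scale P (tensor scale f v) = tensor scale (P f) v"
proof
  fix j
  let ?S = "{k. xycoeff f k \<noteq> 0}"
  have "P f = P (\<Sum>k\<in>?S. cst (xycoeff f k) * xymonom k)"
    using poly2_expansion[OF finite_xycoeff order_refl] by simp
  also have "\<dots> = (\<Sum>k\<in>?S. cst (xycoeff f k) * P (xymonom k))"
    using assms by (simp add: poly2_linear_sum) (simp add: poly2_linear_def)
  finally have Pf: "P f = \<dots>" .
  have "xycoeff (P f) j = (\<Sum>k\<in>?S. xycoeff (P (xymonom k)) j * xycoeff f k)"
    unfolding Pf xycoeff_sum xycoeff_cst_mult by (simp add: mult.commute)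
  moreover have "{k. tensor scale f v k \<noteq> 0} \<subseteq> ?S" by (auto simp: tensor_def)
  ultimately show "tensor_left scale P (tensor scale f v) j = tensor scale (P f) v j"
    by (simp add: tensor_left_eq_sum[OF finite_xycoeff] tensor_def scale_sum_left)
qed

lemma tensor_left_id: "F \<in> tcarrier \<Longrightarrow> tensor_left scale (\<lambda>f. f) F = F"
  by (simp add: tensor_left_eq_sum_tensors flip: tcarrier_eq_sum_tensors)

lemma tensor_left_comp:
  assumes "poly2_linear P"
  shows "tensor_left scale P (tensor_left scale Q F) = tensor_left scale (\<lambda>f. P (Q f)) F"
  unfolding tensor_left_eq_sum_tensors[of Q] tensor_left_eq_sum_tensors[of "\<lambda>f. P (Q f)"]
  by (subst tensor_left_sum) (auto simp: tensor_in_tcarrier tensor_left_tensor assms)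

lemma tensor_left_op_add: "tensor_left scale (\<lambda>f. P f + Q f) F = tensor_left scale P F + tensor_left scale Q F"
  by (simp add: tensor_left_def fun_eq_iff xycoeff_add scale_left_distrib sum.distrib)
lemma tensor_left_op_diff: "tensor_left scale (\<lambda>f. P f - Q f) F = tensor_left scale P F - tensor_left scale Q F"
  by (simp add: tensor_left_def fun_eq_iff xycoeff_diff scale_left_diff_distrib sum_subtractf)
lemma tensor_left_op_cst_mult: "tensor_left scale (\<lambda>f. cst c * P f) F = tscale scale c (tensor_left scale P F)"
  by (simp add: tensor_left_def fun_eq_iff xycoeff_cst_mult tscale_def scale_sum_right)
lemma tensor_left_op_zero: "tensor_left scale (\<lambda>f. 0) F = 0"
  by (simp add: tensor_left_def fun_eq_iff)

text \<open>Evaluating the first factor at \<open>Y = 0\<close>, \<open>X = z\<close> is well defined on the tensor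
  product, kills the image of multiplication by \<open>p\<close> and fixes \<open>1 \<otimes> v\<close>.\<close>

lemma tensor_one_notin_image_mult:
  assumes "poly p z = 0" "v \<noteq> 0"
  shows "tensor scale 1 v \<notin> tensor_left scale (\<lambda>f. [:p:] * f) ` tcarrier"
proof
  define ev where "ev f = cst (poly (coeff f 0) z)" for f
  have ev_linear: "poly2_linear ev"
    by (simp add: poly2_linear_def ev_def coeff_cst_mult cst_add cst_mult)
  assume "tensor scale 1 v \<in> tensor_left scale (\<lambda>f. [:p:] * f) ` tcarrier"
  then obtain G where G: "tensor scale 1 v = tensor_left scale (\<lambda>f. [:p:] * f) G" by blast
  have "tensor scale 1 v = tensor scale (ev 1) v"
    by (simp add: ev_def)
  also have "\<dots> = tensor_left scale ev (tensor scale 1 v)"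
    by (rule tensor_left_tensor[OF ev_linear, symmetric])
  also have "\<dots> = tensor_left scale ev (tensor_left scale (\<lambda>f. [:p:] * f) G)"
    by (simp only: G)
  also have "\<dots> = tensor_left scale (\<lambda>f. ev ([:p:] * f)) G"
    by (rule tensor_left_comp[OF ev_linear])
  also have "(\<lambda>f. ev ([:p:] * f)) = (\<lambda>f. 0)"
    using assms(1) by (simp add: ev_def fun_eq_iff)
  finally have "tensor scale 1 v = 0" by (simp only: tensor_left_op_zero)
  with assms(2) show False by simp
qed

end

section \<open>Submodules and the tensor product of \<open>\<G>\<close>-modules\<close>

definition gsubmodule :: "(complex \<Rightarrow> 'v::ab_group_add \<Rightarrow> 'v) \<Rightarrow> 'v set \<Rightarrow> (gbasis \<Rightarrow> 'v \<Rightarrow> 'v) \<Rightarrow> 'v set \<Rightarrow> bool"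
  where "gsubmodule s M \<rho> N \<longleftrightarrow> N \<subseteq> M \<and> subspace_in s N \<and> (\<forall>x. \<forall>v\<in>N. \<rho> x v \<in> N)"

lemma irreducible_gmod_iff:
  "irreducible_gmod s M \<rho> \<longleftrightarrow> gmodule_on s M \<rho> \<and> M \<noteq> {0} \<and> (\<forall>N. gsubmodule s M \<rho> N \<longrightarrow> N = {0} \<or> N = M)"
  by (simp add: irreducible_gmod_def gsubmodule_def)

lemma irreducible_gmod_submodule_eq:
  assumes "irreducible_gmod s M \<rho>" "gsubmodule s M \<rho> N" "x \<in> N" "x \<noteq> 0"
  shows "N = M"
proof -
  have "N = {0} \<or> N = M" using assms(1,2) by (simp add: irreducible_gmod_iff)
  then show ?thesis using assms(3,4) by auto
qed

lemma gsubmodule_zero: "gsubmodule s M \<rho> N \<Longrightarrow> 0 \<in> N"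
  by (simp add: gsubmodule_def subspace_in_def)
lemma gsubmodule_add: "gsubmodule s M \<rho> N \<Longrightarrow> u \<in> N \<Longrightarrow> v \<in> N \<Longrightarrow> u + v \<in> N"
  by (simp add: gsubmodule_def subspace_in_def)
lemma gsubmodule_scale: "gsubmodule s M \<rho> N \<Longrightarrow> v \<in> N \<Longrightarrow> s c v \<in> N"
  by (simp add: gsubmodule_def subspace_in_def)
lemma gsubmodule_act: "gsubmodule s M \<rho> N \<Longrightarrow> v \<in> N \<Longrightarrow> \<rho> x v \<in> N"
  by (simp add: gsubmodule_def)
lemma gsubmodule_subset: "gsubmodule s M \<rho> N \<Longrightarrow> v \<in> N \<Longrightarrow> v \<in> M"
  by (auto simp: gsubmodule_def)
lemma gsubmodule_sum: "gsubmodule s M \<rho> N \<Longrightarrow> (\<And>i. i \<in> S \<Longrightarrow> g i \<in> N) \<Longrightarrow> sum g S \<in> N"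
  by (induction S rule: infinite_finite_induct) (auto intro: gsubmodule_zero gsubmodule_add)

locale gmodule = cvector_space scale for scale :: "complex \<Rightarrow> 'v::ab_group_add \<Rightarrow> 'v" +
  fixes \<rho> :: "gbasis \<Rightarrow> 'v \<Rightarrow> 'v"
  assumes gmodule: "gmodule_on scale UNIV \<rho>"
begin

lemma act_add: "\<rho> x (u + v) = \<rho> x u + \<rho> x v"
  using gmodule by (simp add: gmodule_on_def)
lemma act_scale: "\<rho> x (scale c u) = scale c (\<rho> x u)"
  using gmodule by (simp add: gmodule_on_def)
lemma act_zero [simp]: "\<rho> x 0 = 0"
  using act_scale[of x 0 0] by simp
lemma act_sum: "\<rho> x (sum g S) = (\<Sum>i\<in>S. \<rho> x (g i))"
  by (induction S rule: infinite_finite_induct) (auto simp: act_add)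
lemma act_bracket: "\<rho> x (\<rho> y v) - \<rho> y (\<rho> x v) = (\<Sum>(c, z)\<leftarrow>br x y. scale c (\<rho> z v))"
  using gmodule by (simp add: gmodule_on_def)

lemma tensor_right_in_tcarrier: "F \<in> tcarrier \<Longrightarrow> tensor_right (\<rho> x) F \<in> tcarrier"
  by (erule tcarrier_mono) (simp add: tensor_right_def)
lemma tensor_right_add: "tensor_right (\<rho> x) (F + G) = tensor_right (\<rho> x) F + tensor_right (\<rho> x) G"
  by (simp add: tensor_right_def fun_eq_iff act_add)
lemma tensor_right_tscale: "tensor_right (\<rho> x) (tscale scale c F) = tscale scale c (tensor_right (\<rho> x) F)"
  by (simp add: tensor_right_def fun_eq_iff act_scale tscale_def)
lemma tensor_right_tensor: "tensor_right (\<rho> x) (tensor scale f v) = tensor scale f (\<rho> x v)"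
  by (simp add: tensor_right_def fun_eq_iff act_scale tensor_def)

lemma tensor_right_tensor_left:
  assumes "F \<in> tcarrier"
  shows "tensor_right (\<rho> x) (tensor_left scale P F) = tensor_left scale P (tensor_right (\<rho> x) F)"
proof
  fix j
  have fin: "finite {k. F k \<noteq> 0}" using assms by (simp add: tcarrier_def)
  have "{k. tensor_right (\<rho> x) F k \<noteq> 0} \<subseteq> {k. F k \<noteq> 0}" by (auto simp: tensor_right_def)
  then have "tensor_left scale P (tensor_right (\<rho> x) F) j
      = (\<Sum>k\<in>{k. F k \<noteq> 0}. scale (xycoeff (P (xymonom k)) j) (tensor_right (\<rho> x) F k))"
    by (rule tensor_left_eq_sum[OF fin])
  then show "tensor_right (\<rho> x) (tensor_left scale P F) j = tensor_left scale P (tensor_right (\<rho> x) F) j"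
    by (simp add: tensor_right_def tensor_left_def act_sum act_scale)
qed

lemma tens_act_eq: "tens_act scale A \<rho> x F = tensor_left scale (A x) F + tensor_right (\<rho> x) F"
  by (simp add: tens_act_def tensor_left_def tensor_right_def fun_eq_iff)

lemma tens_act_tensor:
  "poly2_linear (A x) \<Longrightarrow> tens_act scale A \<rho> x (tensor scale f v) = tensor scale (A x f) v + tensor scale f (\<rho> x v)"
  by (simp add: tens_act_eq tensor_left_tensor tensor_right_tensor)

lemma tensor_left_bracket:
  "tensor_left scale (\<lambda>f. \<Sum>(c, z)\<leftarrow>l. cst c * A z f) F = (\<Sum>(c, z)\<leftarrow>l. tscale scale c (tensor_left scale (A z) F))"
  by (induction l) (auto simp: tensor_left_op_zero tensor_left_op_add tensor_left_op_cst_mult)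

lemma tensor_right_bracket:
  "(\<lambda>j. \<Sum>(c, z)\<leftarrow>l. scale c (\<rho> z (F j))) = (\<Sum>(c, z)\<leftarrow>l. tscale scale c (tensor_right (\<rho> z) F))"
  by (induction l) (auto simp: fun_eq_iff tscale_def tensor_right_def)

lemma sum_list_tscale_add:
  "(\<Sum>(c, z)\<leftarrow>l. tscale scale c (G z + G' z)) = (\<Sum>(c, z)\<leftarrow>l. tscale scale c (G z)) + (\<Sum>(c, z)\<leftarrow>l. tscale scale c (G' z))"
  by (induction l) (auto simp: fun_eq_iff tscale_def scale_right_distrib algebra_simps)

lemma tens_act_bracket:
  assumes A_linear: "\<And>x. poly2_linear (A x)"
    and A_bracket: "\<And>x y f. A x (A y f) - A y (A x f) = (\<Sum>(c, z)\<leftarrow>br x y. cst c * A z f)"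
    and F: "F \<in> tcarrier"
  shows "tens_act scale A \<rho> x (tens_act scale A \<rho> y F) - tens_act scale A \<rho> y (tens_act scale A \<rho> x F)
    = (\<Sum>(c, z)\<leftarrow>br x y. tscale scale c (tens_act scale A \<rho> z F))"
proof -
  let ?T = "tens_act scale A \<rho>"
  have expand: "?T x (?T y F) = tensor_left scale (\<lambda>f. A x (A y f)) F + tensor_left scale (A x) (tensor_right (\<rho> y) F)
      + tensor_left scale (A y) (tensor_right (\<rho> x) F) + tensor_right (\<rho> x) (tensor_right (\<rho> y) F)" for x y
    using F by (simp add: tens_act_eq tensor_left_add tensor_left_in_tcarrier tensor_right_in_tcarrier
        tensor_right_add tensor_right_tensor_left tensor_left_comp A_linear)
  have "?T x (?T y F) - ?T y (?T x F)
      = tensor_left scale (\<lambda>f. A x (A y f) - A y (A x f)) F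
        + (tensor_right (\<rho> x) (tensor_right (\<rho> y) F) - tensor_right (\<rho> y) (tensor_right (\<rho> x) F))"
    unfolding expand tensor_left_op_diff by (simp add: algebra_simps)
  also have "\<dots> = tensor_left scale (\<lambda>f. \<Sum>(c, z)\<leftarrow>br x y. cst c * A z f) F
      + (\<lambda>j. \<Sum>(c, z)\<leftarrow>br x y. scale c (\<rho> z (F j)))"
    by (simp add: A_bracket tensor_right_def fun_eq_iff act_bracket)
  also have "\<dots> = (\<Sum>(c, z)\<leftarrow>br x y. tscale scale c (?T z F))"
    by (simp only: tensor_left_bracket tensor_right_bracket tens_act_eq sum_list_tscale_add)
  finally show ?thesis .
qed

lemma tens_act_gmodule:
  assumes "\<And>x. poly2_linear (A x)"
    and "\<And>x y f. A x (A y f) - A y (A x f) = (\<Sum>(c, z)\<leftarrow>br x y. cst c * A z f)"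
  shows "gmodule_on (tscale scale) tcarrier (tens_act scale A \<rho>)"
  unfolding gmodule_on_def
  using tcarrier_subspace tens_act_bracket[OF assms]
  by (simp add: tens_act_eq tcarrier_add tensor_left_in_tcarrier tensor_right_in_tcarrier tensor_left_add
      tensor_right_add tensor_left_tscale tensor_right_tscale tscale_add algebra_simps)

lemma image_tensor_left_gsubmodule:
  assumes A_linear: "\<And>x. poly2_linear (A x)" and M_linear: "poly2_linear M"
    and commute: "\<And>x. \<exists>Q. poly2_linear Q \<and> (\<forall>f. A x (M f) = M (Q f))"
  shows "gsubmodule (tscale scale) tcarrier (tens_act scale A \<rho>) (tensor_left scale M ` tcarrier)"
  unfolding gsubmodule_def subspace_in_def
proof (intro conjI ballI allI)
  show "tensor_left scale M ` tcarrier \<subseteq> tcarrier"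
    using tensor_left_in_tcarrier by blast
  show "0 \<in> tensor_left scale M ` tcarrier"
    using tcarrier_zero tensor_left_zero by (metis image_eqI)
next
  fix F G assume "F \<in> tensor_left scale M ` tcarrier" "G \<in> tensor_left scale M ` tcarrier"
  then show "F + G \<in> tensor_left scale M ` tcarrier"
    by (auto simp flip: tensor_left_add intro: tcarrier_add)
next
  fix c F assume "F \<in> tensor_left scale M ` tcarrier"
  then show "tscale scale c F \<in> tensor_left scale M ` tcarrier"
    by (auto simp flip: tensor_left_tscale intro: tcarrier_tscale)
next
  fix x F assume "F \<in> tensor_left scale M ` tcarrier"
  then obtain G where G: "G \<in> tcarrier" "F = tensor_left scale M G" by blast
  obtain Q where Q: "poly2_linear Q" "\<And>f. A x (M f) = M (Q f)" using commute by blast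
  have "tens_act scale A \<rho> x F = tensor_left scale M (tensor_left scale Q G + tensor_right (\<rho> x) G)"
    using G by (simp add: tens_act_eq tensor_left_comp A_linear M_linear Q tensor_right_tensor_left
        tensor_left_add tensor_left_in_tcarrier tensor_right_in_tcarrier)
  then show "tens_act scale A \<rho> x F \<in> tensor_left scale M ` tcarrier"
    using G by (simp add: tcarrier_add tensor_left_in_tcarrier tensor_right_in_tcarrier)
qed

definition killed_above :: "nat \<Rightarrow> 'v set" where
  "killed_above K = {v. \<forall>x. gdeg x > int K \<longrightarrow> \<rho> x v = 0}"

lemma killed_above_zero: "0 \<in> killed_above K"
  by (simp add: killed_above_def)
lemma killed_above_mono: "K \<le> K' \<Longrightarrow> killed_above K \<subseteq> killed_above K'"
  by (auto simp: killed_above_def)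
lemma killed_above_tensor_left:
  "(\<And>k. G k \<in> killed_above K) \<Longrightarrow> tensor_left scale P G j \<in> killed_above K"
  by (simp add: killed_above_def tensor_left_def act_sum act_scale)

lemma tens_act_killed_above:
  "(\<And>k. G k \<in> killed_above K) \<Longrightarrow> gdeg x > int K \<Longrightarrow> tens_act scale A \<rho> x G = tensor_left scale (A x) G"
  by (simp add: tens_act_eq tensor_right_def killed_above_def fun_eq_iff)

end


section \<open>Forward differences\<close>

definition fwd_diff :: "'a::comm_ring_1 \<Rightarrow> 'a poly \<Rightarrow> 'a poly" where
  "fwd_diff c p = pcompose p [:c, 1:] - p"

lemma fwd_diff_degree_0: "degree p = 0 \<Longrightarrow> fwd_diff c p = 0"
  by (elim degree_eq_zeroE) (simp add: fwd_diff_def)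

lemma degree_fwd_diff_less:
  fixes p :: "'a::idom poly"
  assumes "degree p > 0"
  shows "degree (fwd_diff c p) < degree p"
proof -
  have deg: "degree (pcompose p [:c, 1:]) = degree p"
    by (simp add: degree_pcompose)
  have "coeff (pcompose p [:c, 1:]) (degree p) = lead_coeff p"
    using lead_coeff_comp[of "[:c, 1:]" p] deg by simp
  then have "coeff (fwd_diff c p) i = 0" if "i \<ge> degree p" for i
    using that deg by (cases "i = degree p") (simp_all add: fwd_diff_def coeff_eq_0)
  then have "degree (fwd_diff c p) \<le> degree p - 1"
    using assms by (intro degree_le) auto
  then show ?thesis using assms by linarith
qed

text \<open>A polynomial invariant under a nonzero translation takes a single value on
  infinitely many points, so it is constant.\<close>

lemma fwd_diff_eq_0_iff:
  fixes p :: "'a::{idom, ring_char_0} poly"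
  assumes "c \<noteq> 0"
  shows "fwd_diff c p = 0 \<longleftrightarrow> degree p = 0"
proof
  assume "fwd_diff c p = 0"
  then have invariant: "pcompose p [:c, 1:] = p" by (simp add: fwd_diff_def)
  have step: "poly p (x + c) = poly p x" for x
    using arg_cong[OF invariant, of "\<lambda>q. poly q x"] by (simp add: poly_pcompose algebra_simps)
  have "poly p (of_nat n * c) = poly p 0" for n
  proof (induction n)
    case (Suc n)
    then show ?case using step[of "of_nat n * c"] by (simp add: distrib_right add.commute)
  qed simp
  then have "range (\<lambda>n::nat. of_nat n * c) \<subseteq> {x. poly (p - [:poly p 0:]) x = 0}" by auto
  moreover have "infinite (range (\<lambda>n::nat. of_nat n * c))"
    using assms by (intro range_inj_infinite) (auto intro!: injI)
  ultimately have "p - [:poly p 0:] = 0"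
    using poly_roots_finite infinite_super by blast
  then show "degree p = 0" by (metis degree_pCons_0 eq_iff_diff_eq_0)
qed (rule fwd_diff_degree_0)

text \<open>One application of \<open>T\<close> lowers the maximal degree of the family, and a member of
  maximal positive degree stays nonzero.\<close>

lemma funpow_family_degree_0:
  fixes T :: "'a::zero \<Rightarrow> 'a" and d :: "'a \<Rightarrow> nat"
  assumes dom: "\<And>x. Dom x \<Longrightarrow> Dom (T x)"
    and kill: "\<And>x. Dom x \<Longrightarrow> d x = 0 \<Longrightarrow> T x = 0"
    and lower: "\<And>x. Dom x \<Longrightarrow> d x \<noteq> 0 \<Longrightarrow> T x \<noteq> 0 \<and> d (T x) < d x"
    and d_zero: "d 0 = 0"
    and B: "finite B" "\<And>b. b \<in> B \<Longrightarrow> Dom (f b)" "\<exists>b\<in>B. f b \<noteq> 0"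
  shows "\<exists>k. (\<forall>b\<in>B. d ((T ^^ k) (f b)) = 0) \<and> (\<exists>b\<in>B. (T ^^ k) (f b) \<noteq> 0)"
proof -
  obtain M where "\<forall>b\<in>B. d (f b) \<le> M"
    using B(1) by (auto intro: member_le_sum)
  then show ?thesis using B(2,3)
  proof (induction M arbitrary: f)
    case 0
    then show ?case by (intro exI[of _ 0]) auto
  next
    case (Suc M)
    show ?case
    proof (cases "\<exists>b\<in>B. d (f b) \<noteq> 0")
      case False
      then show ?thesis using Suc.prems(3) by (intro exI[of _ 0]) auto
    next
      case True
      then have "\<exists>b\<in>B. T (f b) \<noteq> 0" using lower Suc.prems(2) by blast
      moreover have "\<forall>b\<in>B. d (T (f b)) \<le> M"
      proof
        fix b assume b: "b \<in> B"
        show "d (T (f b)) \<le> M"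
        proof (cases "d (f b) = 0")
          case True
          then show ?thesis using kill[OF Suc.prems(2)[OF b]] d_zero by simp
        next
          case False
          then show ?thesis using lower[OF Suc.prems(2)[OF b]] Suc.prems(1) b by fastforce
        qed
      qed
      ultimately obtain k where "\<forall>b\<in>B. d ((T ^^ k) (T (f b))) = 0" "\<exists>b\<in>B. (T ^^ k) (T (f b)) \<noteq> 0"
        using Suc.IH[of "\<lambda>b. T (f b)"] dom Suc.prems(2) by blast
      then show ?thesis by (intro exI[of _ "Suc k"]) (simp only: funpow_Suc_right comp_apply)
    qed
  qed
qed

section \<open>Irreducibility of \<open>\<Omega> \<otimes> R\<close>\<close>

text \<open>This abstracts \<open>\<Omega>(lam, eta, sig, 0)\<close> (with \<open>Zc = I\<close>, \<open>e = -1\<close>) and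
  \<open>\<Omega>(lam, eta, 0, sig)\<close> (with \<open>Zc = J\<close>, \<open>e = 1\<close>); \<open>L\<^sub>m\<close> multiplies by \<open>Y + aL m\<close>.\<close>

locale omega_tensor = gmodule scale \<rho> for scale :: "complex \<Rightarrow> 'v::ab_group_add \<Rightarrow> 'v" and \<rho> +
  fixes A :: "gbasis \<Rightarrow> poly2 \<Rightarrow> poly2"
    and lam :: complex and sig :: "complex poly" and e :: complex
    and Zc :: "int \<Rightarrow> gbasis" and aL :: "int \<Rightarrow> complex poly"
  assumes A_linear: "\<And>x. poly2_linear (A x)"
    and A_bracket: "\<And>x y f. A x (A y f) - A y (A x f) = (\<Sum>(c, z)\<leftarrow>br x y. cst c * A z f)"
    and A_H: "\<And>m f. A (H m) f = cst (lam powi m) * polyX * shiftY m f"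
    and A_L: "\<And>m f. A (L m) f = cst (lam powi m) * shiftY m f * [:aL m, 1:]"
    and A_Zc: "\<And>m f. A (Zc m) f = cst (lam powi m) * [:sig:] * shiftX e (shiftY m f)"
    and gdeg_Zc: "\<And>m. gdeg (Zc m) = m"
    and A_sig_multiple: "\<And>x. \<exists>Q. poly2_linear Q \<and> (\<forall>f. A x ([:sig:] * f) = [:sig:] * Q f)"
    and lam_nonzero: "lam \<noteq> 0" and e_nonzero: "e \<noteq> 0" and sig_nonzero: "sig \<noteq> 0"
    and irreducible: "irreducible_gmod scale UNIV \<rho>"
    and restricted: "restricted_gmod UNIV \<rho>"
begin

abbreviation TA :: "gbasis \<Rightarrow> (nat \<times> nat \<Rightarrow> 'v) \<Rightarrow> nat \<times> nat \<Rightarrow> 'v" where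
  "TA \<equiv> tens_act scale A \<rho>"

abbreviation tsubmodule :: "(nat \<times> nat \<Rightarrow> 'v) set \<Rightarrow> bool" where
  "tsubmodule N \<equiv> gsubmodule (tscale scale) tcarrier TA N"

lemma tsubmodule_diff:
  assumes N: "tsubmodule N" and "F \<in> N" "G \<in> N" shows "F - G \<in> N"
  using gsubmodule_add[OF N assms(2) gsubmodule_scale[OF N assms(3), of "-1"]]
  by (simp add: tscale_minus_one)

lemma tsubmodule_tscale_cancel:
  assumes N: "tsubmodule N" and "c \<noteq> 0" "tscale scale c F \<in> N" shows "F \<in> N"
  using gsubmodule_scale[OF N assms(3), of "1 / c"] assms(2) by (simp add: tscale_def)

lemma killed_above_exists: "finite S \<Longrightarrow> \<exists>K. S \<subseteq> killed_above K"
proof (induction S rule: finite_induct)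
  case (insert v S)
  then obtain K1 where "S \<subseteq> killed_above K1" by blast
  moreover obtain K2 where "v \<in> killed_above K2"
    using restricted by (auto simp: restricted_gmod_def killed_above_def)
  ultimately have "insert v S \<subseteq> killed_above (max K1 K2)"
    using killed_above_mono[of K1 "max K1 K2"] killed_above_mono[of K2 "max K1 K2"] by auto
  then show ?case by blast
qed simp

lemma tcarrier_killed_above:
  assumes "F \<in> tcarrier"
  obtains K where "\<And>k. F k \<in> killed_above K"
proof -
  have "finite (F ` {k. F k \<noteq> 0})" using assms by (simp add: tcarrier_def)
  then obtain K where "F ` {k. F k \<noteq> 0} \<subseteq> killed_above K" using killed_above_exists by blast
  then have "F k \<in> killed_above K" for k by (cases "F k = 0") (auto simp: killed_above_zero)
  then show ?thesis using that by blast
qed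

definition left_stable :: "(nat \<times> nat \<Rightarrow> 'v) set \<Rightarrow> nat \<Rightarrow> (poly2 \<Rightarrow> poly2) \<Rightarrow> bool" where
  "left_stable N K P \<longleftrightarrow> poly2_linear P \<and>
     (\<forall>G\<in>N. (\<forall>k. G k \<in> killed_above K) \<longrightarrow> tensor_left scale P G \<in> N)"

lemma left_stable_id: "tsubmodule N \<Longrightarrow> left_stable N K (\<lambda>f. f)"
  by (auto simp: left_stable_def poly2_linear_def tensor_left_id dest: gsubmodule_subset)

lemma left_stable_diff:
  "tsubmodule N \<Longrightarrow> left_stable N K P \<Longrightarrow> left_stable N K Q \<Longrightarrow> left_stable N K (\<lambda>f. P f - Q f)"
  by (auto simp: left_stable_def poly2_linear_diff tensor_left_op_diff tsubmodule_diff)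

lemma left_stable_comp: "left_stable N K P \<Longrightarrow> left_stable N K Q \<Longrightarrow> left_stable N K (\<lambda>f. P (Q f))"
  unfolding left_stable_def using tensor_left_comp killed_above_tensor_left poly2_linear_comp by metis

lemma left_stable_funpow: "tsubmodule N \<Longrightarrow> left_stable N K P \<Longrightarrow> left_stable N K (P ^^ n)"
proof (induction n)
  case 0
  then show ?case using left_stable_id by (simp add: id_def)
next
  case (Suc n)
  then show ?case using left_stable_comp[of N K P "P ^^ n"] by (simp add: comp_def)
qed

definition shiftXY :: "int \<Rightarrow> poly2 \<Rightarrow> poly2" where
  "shiftXY m f = shiftX e (shiftY m f)"

text \<open>For \<open>m > K\<close> the operator \<open>Zc m\<close> acts on \<open>C[X,Y] \<otimes> killed_above K\<close> through the
  first factor only, as a nonzero multiple of \<open>shiftXY\<close>.\<close>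

lemma left_stable_shiftXY:
  assumes N: "tsubmodule N" and sig: "sig = [:c:]" "c \<noteq> 0" and m: "m > int K"
  shows "left_stable N K (shiftXY m)"
  unfolding left_stable_def
proof (intro conjI ballI impI)
  show "poly2_linear (shiftXY m)"
    using poly2_linear_shifts[of 1 e m] by (simp add: shiftXY_def[abs_def])
  fix G assume G: "G \<in> N" "\<forall>k. G k \<in> killed_above K"
  have A_Zc_shiftXY: "A (Zc m) = (\<lambda>f. cst (lam powi m * c) * shiftXY m f)"
    by (simp add: fun_eq_iff A_Zc sig shiftXY_def cst_mult) (simp add: cst_def)
  have "TA (Zc m) G = tensor_left scale (A (Zc m)) G"
    using G(2) m by (intro tens_act_killed_above) (auto simp: gdeg_Zc)
  also have "\<dots> = tscale scale (lam powi m * c) (tensor_left scale (shiftXY m) G)"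
    by (simp add: A_Zc_shiftXY tensor_left_op_cst_mult)
  finally have "tscale scale (lam powi m * c) (tensor_left scale (shiftXY m) G) \<in> N"
    using gsubmodule_act[OF N G(1), of "Zc m"] by simp
  then show "tensor_left scale (shiftXY m) G \<in> N"
    by (rule tsubmodule_tscale_cancel[OF N, rotated]) (simp add: lam_nonzero sig)
qed

lemma shiftXY_succ_diff: "shiftXY (m + 1) f - shiftXY m f = shiftX e (shiftY m (fwd_diff [:-1:] f))"
proof -
  have "shiftY 1 f = fwd_diff [:-1:] f + f"
    by (simp add: shiftY_def fwd_diff_def)
  then have "shiftY (m + 1) f = shiftY m (fwd_diff [:-1:] f) + shiftY m f"
    by (simp only: shiftY_shiftY[symmetric] shiftY_add)
  then show ?thesis by (simp add: shiftXY_def shiftX_add)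
qed

lemma shiftXY_diff_degree_0:
  assumes "degree g = 0" shows "shiftXY m g - g = [:fwd_diff e (coeff g 0):]"
proof -
  obtain p where "g = [:p:]" using assms by (rule degree_eq_zeroE)
  then show ?thesis by (simp add: shiftXY_def shiftX_const fwd_diff_def)
qed

lemma shiftXY_lower_Y_degree:
  assumes "finite B" "\<exists>b\<in>B. f b \<noteq> 0"
  shows "\<exists>k. (\<forall>b\<in>B. degree (((\<lambda>g. shiftXY (m + 1) g - shiftXY m g) ^^ k) (f b)) = 0)
           \<and> (\<exists>b\<in>B. ((\<lambda>g. shiftXY (m + 1) g - shiftXY m g) ^^ k) (f b) \<noteq> 0)"
  using assms
  by (intro funpow_family_degree_0[where Dom = "\<lambda>_. True"])
    (auto simp: shiftXY_succ_diff fwd_diff_degree_0 fwd_diff_eq_0_iff degree_fwd_diff_less)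

lemma shiftXY_lower_X_degree:
  assumes "finite B" "\<And>b. b \<in> B \<Longrightarrow> degree (g b) = 0" "\<exists>b\<in>B. g b \<noteq> 0"
  shows "\<exists>k. (\<forall>b\<in>B. degree (coeff (((\<lambda>g. shiftXY m g - g) ^^ k) (g b)) 0) = 0)
           \<and> (\<exists>b\<in>B. ((\<lambda>g. shiftXY m g - g) ^^ k) (g b) \<noteq> 0)"
  using assms
  by (intro funpow_family_degree_0[where Dom = "\<lambda>x. degree x = 0" and d = "\<lambda>x. degree (coeff x 0)"])
    (auto simp: shiftXY_diff_degree_0 fwd_diff_degree_0 fwd_diff_eq_0_iff degree_fwd_diff_less e_nonzero)

lemma left_stable_to_constants:
  assumes N: "tsubmodule N" and sig: "sig = [:c:]" "c \<noteq> 0"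
    and B: "finite B" "\<exists>b\<in>B. f b \<noteq> 0"
  shows "\<exists>P. left_stable N K P \<and> (\<forall>b\<in>B. \<exists>a. P (f b) = cst a) \<and> (\<exists>b\<in>B. P (f b) \<noteq> 0)"
proof -
  define m where "m = int K + 1"
  define D where "D g = shiftXY (m + 1) g - shiftXY m g" for g
  define E where "E g = shiftXY m g - g" for g
  obtain k1 where k1: "\<forall>b\<in>B. degree ((D ^^ k1) (f b)) = 0" "\<exists>b\<in>B. (D ^^ k1) (f b) \<noteq> 0"
    using shiftXY_lower_Y_degree[OF B, of m] unfolding D_def by blast
  obtain k2 where k2: "\<forall>b\<in>B. degree (coeff ((E ^^ k2) ((D ^^ k1) (f b))) 0) = 0"
      "\<exists>b\<in>B. (E ^^ k2) ((D ^^ k1) (f b)) \<noteq> 0"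
    using shiftXY_lower_X_degree[OF B(1), of "\<lambda>b. (D ^^ k1) (f b)" m] k1 unfolding E_def by blast
  have E_degree: "degree ((E ^^ k) g) = 0" if "degree g = 0" for k g
    using that by (induction k) (simp_all add: E_def shiftXY_diff_degree_0)
  have const: "\<forall>b\<in>B. \<exists>a. (E ^^ k2) ((D ^^ k1) (f b)) = cst a"
    using k1(1) k2(1) by (auto intro!: degree_0_imp_cst E_degree)
  have S: "left_stable N K (shiftXY k)" if "k > int K" for k
    using left_stable_shiftXY[OF N sig that] .
  have D: "left_stable N K D"
    unfolding D_def[abs_def] by (rule left_stable_diff[OF N S S]) (simp_all add: m_def)
  have E: "left_stable N K E"
    unfolding E_def[abs_def] by (rule left_stable_diff[OF N S left_stable_id[OF N]]) (simp add: m_def)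
  have "left_stable N K (\<lambda>g. (E ^^ k2) ((D ^^ k1) g))"
    by (rule left_stable_comp[OF left_stable_funpow[OF N E] left_stable_funpow[OF N D]])
  then show ?thesis
    using const k2(2) by (intro exI[of _ "\<lambda>g. (E ^^ k2) ((D ^^ k1) g)"]) simp
qed

lemma submodule_contains_one_tensor:
  assumes N: "tsubmodule N" and sig: "sig = [:c:]" "c \<noteq> 0" and F: "F \<in> N" "F \<noteq> 0"
  shows "\<exists>v. v \<noteq> 0 \<and> tensor scale 1 v \<in> N"
proof -
  have F_carrier: "F \<in> tcarrier" using gsubmodule_subset[OF N F(1)] .
  obtain K where K: "\<And>k. F k \<in> killed_above K" using tcarrier_killed_above[OF F_carrier] by blast
  obtain B f where B: "finite B" "independent B" and F_eq: "F = (\<Sum>b\<in>B. tensor scale (f b) b)"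
    using tensor_decomposition[OF F_carrier] by blast
  have "\<exists>b\<in>B. f b \<noteq> 0" using F(2) F_eq by auto
  then obtain P where P: "left_stable N K P" "\<forall>b\<in>B. \<exists>a. P (f b) = cst a" "\<exists>b\<in>B. P (f b) \<noteq> 0"
    using left_stable_to_constants[OF N sig B(1)] by blast
  obtain a where a: "\<And>b. b \<in> B \<Longrightarrow> P (f b) = cst (a b)"
    using bchoice[OF P(2)] by blast
  have "poly2_linear P" using P(1) by (simp add: left_stable_def)
  then have "tensor_left scale P F = (\<Sum>b\<in>B. tensor scale (P (f b)) b)"
    by (simp add: F_eq tensor_left_sum tensor_in_tcarrier tensor_left_tensor)
  also have "\<dots> = tensor scale 1 (\<Sum>b\<in>B. scale (a b) b)"
    by (simp add: a tensor_cst tensor_sum_right)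
  finally have "tensor scale 1 (\<Sum>b\<in>B. scale (a b) b) = tensor_left scale P F" ..
  moreover have "tensor_left scale P F \<in> N"
    using P(1) F(1) K by (simp add: left_stable_def)
  ultimately have "tensor scale 1 (\<Sum>b\<in>B. scale (a b) b) \<in> N" by simp
  moreover have "(\<Sum>b\<in>B. scale (a b) b) \<noteq> 0"
  proof
    assume "(\<Sum>b\<in>B. scale (a b) b) = 0"
    then have "\<forall>b\<in>B. a b = 0" using independentD[OF B(2) B(1) order_refl] by blast
    then show False using a P(3) by auto
  qed
  ultimately show ?thesis by blast
qed

lemma submodule_tensor_act_high:
  assumes N: "tsubmodule N" and v: "v \<in> killed_above K" and x: "gdeg x > int K"
    and f: "tensor scale f v \<in> N"
  shows "tensor scale (A x f) v \<in> N"
proof -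
  have "TA x (tensor scale f v) = tensor scale (A x f) v"
    using v x by (simp add: tens_act_tensor A_linear killed_above_def)
  then show ?thesis using gsubmodule_act[OF N f, of x] by simp
qed

lemma submodule_tensor_cst_cancel:
  assumes N: "tsubmodule N" and "c \<noteq> 0" "tensor scale (cst c * f) v \<in> N"
  shows "tensor scale f v \<in> N"
  using assms(3) unfolding tensor_cst_mult_left by (rule tsubmodule_tscale_cancel[OF N assms(2)])

lemma submodule_tensor_Y_const:
  assumes N: "tsubmodule N" and v: "v \<in> killed_above K" and one: "tensor scale 1 v \<in> N"
  shows "tensor scale [:p:] v \<in> N"
proof (induction p)
  case 0
  then show ?case using gsubmodule_zero[OF N] by (simp only: pCons_0_0 tensor_zero_left)
next
  case (pCons a p)
  have "tensor scale (cst (lam powi (int K + 1)) * (polyX * [:p:])) v \<in> N"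
    using submodule_tensor_act_high[OF N v _ pCons.IH, of "H (int K + 1)"] by (simp add: A_H mult.assoc)
  then have "tensor scale (polyX * [:p:]) v \<in> N"
    by (rule submodule_tensor_cst_cancel[OF N, rotated]) (simp add: lam_nonzero)
  moreover have "tensor scale (cst a * 1) v \<in> N"
    using gsubmodule_scale[OF N one] by (simp only: tensor_cst_mult_left)
  moreover have "[:pCons a p:] = cst a * 1 + polyX * [:p:]"
    by (simp add: polyX_def cst_def)
  ultimately show ?case using gsubmodule_add[OF N] by (simp only: tensor_add_left)
qed

text \<open>Multiplication by \<open>Y\<close> is obtained from \<open>L\<^sub>m\<close>, which multiplies by \<open>Y + aL m\<close>
  after the shift \<open>Y \<mapsto> Y - m\<close>; both the shift and \<open>aL m\<close> only contribute terms of lower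
  \<open>Y\<close>-degree.\<close>

lemma submodule_tensor_mult_Y:
  assumes N: "tsubmodule N" and v: "v \<in> killed_above K"
    and low: "\<And>g. degree g \<le> n \<Longrightarrow> tensor scale g v \<in> N" and g: "degree g \<le> n"
  shows "tensor scale (polyY * g) v \<in> N"
proof -
  define m where "m = int K + 1"
  define h where "h = shiftY m g * [:aL m, 1:]"
  define \<Delta> where "\<Delta> = fwd_diff [:- of_int m:] g"
  have "gdeg (L m) > int K" by (simp add: m_def)
  from submodule_tensor_act_high[OF N v this low[OF g]]
  have "tensor scale (cst (lam powi m) * h) v \<in> N" by (simp only: A_L h_def mult.assoc)
  then have h: "tensor scale h v \<in> N"
    by (rule submodule_tensor_cst_cancel[OF N, rotated]) (simp add: lam_nonzero)
  have "shiftY m g = g + \<Delta>" "[:aL m, 1:] = [:aL m:] + polyY"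
    by (simp_all add: \<Delta>_def fwd_diff_def shiftY_def polyY_def)
  then have "h - polyY * g = polyY * \<Delta> + shiftY m g * [:aL m:]"
    unfolding h_def by algebra
  moreover have "degree (polyY * \<Delta>) \<le> n"
  proof (cases "degree g = 0")
    case True
    then show ?thesis by (simp add: \<Delta>_def fwd_diff_degree_0)
  next
    case False
    then have "degree \<Delta> < degree g" by (simp add: \<Delta>_def degree_fwd_diff_less)
    then show ?thesis using g degree_pCons_le[of 0 \<Delta>] by (simp add: polyY_def)
  qed
  moreover have "degree (shiftY m g * [:aL m:]) \<le> n"
    using g degree_mult_le[of "shiftY m g" "[:aL m:]"] by simp
  ultimately have "degree (h - polyY * g) \<le> n"
    by (simp add: degree_add_le)
  then have "tensor scale h v - tensor scale (h - polyY * g) v \<in> N"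
    using h low tsubmodule_diff[OF N] by blast
  then show ?thesis by (simp add: tensor_diff_left)
qed

lemma submodule_contains_tensors:
  assumes N: "tsubmodule N" and one: "tensor scale 1 v \<in> N"
  shows "tensor scale f v \<in> N"
proof -
  obtain K where v: "v \<in> killed_above K" using killed_above_exists[of "{v}"] by auto
  have "\<forall>f. degree f \<le> n \<longrightarrow> tensor scale f v \<in> N" for n
  proof (induction n)
    case 0
    show ?case
    proof (intro allI impI)
      fix f :: poly2 assume "degree f \<le> 0"
      then obtain p where "f = [:p:]" by (auto elim: degree_eq_zeroE)
      then show "tensor scale f v \<in> N" using submodule_tensor_Y_const[OF N v one] by simp
    qed
  next
    case (Suc n)
    show ?case
    proof (intro allI impI)
      fix f :: poly2 assume f: "degree f \<le> Suc n"
      obtain a g where fg: "f = pCons a g" by (cases f)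
      then have "degree g \<le> n" using f by (cases "g = 0") auto
      then have "tensor scale (polyY * g) v \<in> N" using submodule_tensor_mult_Y[OF N v] Suc.IH by blast
      moreover have "tensor scale [:a:] v \<in> N" using submodule_tensor_Y_const[OF N v one] .
      moreover have "f = [:a:] + polyY * g" by (simp add: fg polyY_def)
      ultimately show "tensor scale f v \<in> N" using gsubmodule_add[OF N] by (simp only: tensor_add_left)
    qed
  qed
  then show ?thesis by blast
qed

lemma one_tensors_gsubmodule:
  assumes N: "tsubmodule N"
  shows "gsubmodule scale UNIV \<rho> {v. tensor scale 1 v \<in> N}"
  unfolding gsubmodule_def subspace_in_def
proof (intro conjI ballI allI subset_UNIV)
  show "0 \<in> {v. tensor scale 1 v \<in> N}" using gsubmodule_zero[OF N] by simp
  fix u v assume "u \<in> {v. tensor scale 1 v \<in> N}" "v \<in> {v. tensor scale 1 v \<in> N}"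
  then show "u + v \<in> {v. tensor scale 1 v \<in> N}" using gsubmodule_add[OF N] by (simp add: tensor_add_right)
next
  fix c v assume "v \<in> {v. tensor scale 1 v \<in> N}"
  then show "scale c v \<in> {v. tensor scale 1 v \<in> N}" using gsubmodule_scale[OF N] by (simp add: tensor_scale_right)
next
  fix x v assume "v \<in> {v. tensor scale 1 v \<in> N}"
  then have v: "tensor scale 1 v \<in> N" by simp
  have "TA x (tensor scale 1 v) - tensor scale (A x 1) v \<in> N"
    using tsubmodule_diff[OF N gsubmodule_act[OF N v] submodule_contains_tensors[OF N v]] .
  then show "\<rho> x v \<in> {v. tensor scale 1 v \<in> N}" by (simp add: tens_act_tensor A_linear)
qed

lemma exists_nonzero_vector: "\<exists>v::'v. v \<noteq> 0"
  using irreducible by (auto simp: irreducible_gmod_def)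

lemma submodule_eq_tcarrier:
  assumes N: "tsubmodule N" and sig: "sig = [:c:]" "c \<noteq> 0" and F: "F \<in> N" "F \<noteq> 0"
  shows "N = tcarrier"
proof -
  obtain v where v: "v \<noteq> 0" "tensor scale 1 v \<in> N"
    using submodule_contains_one_tensor[OF N sig F] by blast
  have "{v. tensor scale 1 v \<in> N} = UNIV"
    by (rule irreducible_gmod_submodule_eq[OF irreducible one_tensors_gsubmodule[OF N] _ v(1)])
      (simp add: v(2))
  then have all: "tensor scale f u \<in> N" for f u
    using submodule_contains_tensors[OF N] by auto
  have "G \<in> N" if "G \<in> tcarrier" for G
  proof -
    have "(\<Sum>k\<in>{k. G k \<noteq> 0}. tensor scale (xymonom k) (G k)) \<in> N"
      by (rule gsubmodule_sum[OF N]) (rule all)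
    then show ?thesis by (simp only: tcarrier_eq_sum_tensors[OF that, symmetric])
  qed
  then show ?thesis using gsubmodule_subset[OF N] by auto
qed

lemma irreducible_if_const:
  assumes sig: "sig = [:c:]" "c \<noteq> 0"
  shows "irreducible_gmod (tscale scale) tcarrier TA"
proof -
  obtain v :: 'v where "v \<noteq> 0" using exists_nonzero_vector by blast
  then have "tensor scale 1 v \<noteq> 0" by simp
  then have "(tcarrier :: (nat \<times> nat \<Rightarrow> 'v) set) \<noteq> {0}" using tensor_in_tcarrier[of 1 v] by (metis singletonD)
  moreover have "N = {0} \<or> N = tcarrier" if N: "tsubmodule N" for N
  proof (cases "\<exists>F\<in>N. F \<noteq> 0")
    case True
    then show ?thesis using submodule_eq_tcarrier[OF N sig] by auto
  next
    case False
    then show ?thesis using gsubmodule_zero[OF N] by auto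
  qed
  ultimately show ?thesis
    unfolding irreducible_gmod_iff using tens_act_gmodule[OF A_linear A_bracket] by blast
qed

lemma reducible_if_not_const:
  assumes not_const: "\<nexists>c. c \<noteq> 0 \<and> sig = [:c:]"
  shows "\<not> irreducible_gmod (tscale scale) tcarrier TA"
proof
  assume irr: "irreducible_gmod (tscale scale) tcarrier TA"
  let ?N = "tensor_left scale (\<lambda>f. [:sig:] * f) ` tcarrier"
  have N: "tsubmodule ?N"
    using A_sig_multiple by (intro image_tensor_left_gsubmodule A_linear poly2_linear_mult_left) blast
  obtain v :: 'v where v: "v \<noteq> 0" using exists_nonzero_vector by blast
  obtain z where "poly sig z = 0"
    using fundamental_theorem_of_algebra_alt[of sig] not_const by auto
  then have "tensor scale 1 v \<notin> ?N" using v by (rule tensor_one_notin_image_mult)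
  moreover have "?N = tcarrier"
  proof (rule irreducible_gmod_submodule_eq[OF irr N])
    show "tensor scale [:sig:] v \<in> ?N"
    proof (rule image_eqI)
      show "tensor scale [:sig:] v = tensor_left scale (\<lambda>f. [:sig:] * f) (tensor scale 1 v)"
        using tensor_left_tensor[OF poly2_linear_mult_left, of "[:sig:]" 1 v] by simp
    qed (rule tensor_in_tcarrier)
    have "coeff sig (degree sig) \<noteq> 0" using sig_nonzero by simp
    then have "tensor scale [:sig:] v (degree sig, 0) \<noteq> 0" using v by (simp add: tensor_def xycoeff_def)
    then show "tensor scale [:sig:] v \<noteq> 0" by auto
  qed
  ultimately show False using tensor_in_tcarrier[of 1 v] by simp
qed

theorem irreducible_iff_const: "irreducible_gmod (tscale scale) tcarrier TA \<longleftrightarrow> (\<exists>c. c \<noteq> 0 \<and> sig = [:c:])"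
  using irreducible_if_const reducible_if_not_const by blast

end

theorem theorem4p1:
  fixes s :: "complex \<Rightarrow> 'v::ab_group_add \<Rightarrow> 'v"
    and \<rho> :: "gbasis \<Rightarrow> 'v \<Rightarrow> 'v"
    and lam eta :: complex
    and sig :: "complex poly"
  assumes "vector_space s"
    and "lam \<noteq> 0"
    and "sig \<noteq> 0"
    and "irreducible_gmod s UNIV \<rho>"
    and "restricted_gmod UNIV \<rho>"
  shows "(irreducible_gmod (tscale s) tcarrier (tens_act s (omegaI lam eta sig) \<rho>)
            \<longleftrightarrow> (\<exists>c. c \<noteq> 0 \<and> sig = [:c:]))
       \<and> (irreducible_gmod (tscale s) tcarrier (tens_act s (omegaJ lam eta sig) \<rho>)
            \<longleftrightarrow> (\<exists>c. c \<noteq> 0 \<and> sig = [:c:]))"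
proof -
  have R: "gmodule s \<rho>"
    using assms(1,4) by (simp add: gmodule_def gmodule_axioms_def cvector_space_def irreducible_gmod_def)
  have OI: "omega_tensor s \<rho> (omegaI lam eta sig) lam sig (-1) I (\<lambda>m. [:of_int m * eta, - of_int m:])"
    by (intro omega_tensor.intro R omega_tensor_axioms.intro poly2_linear_omegaI omegaI_bracket
        omegaI_sig_multiple) (simp_all add: assms)
  have OJ: "omega_tensor s \<rho> (omegaJ lam eta sig) lam sig 1 J (\<lambda>m. [:of_int m * eta, of_int m:])"
    by (intro omega_tensor.intro R omega_tensor_axioms.intro poly2_linear_omegaJ omegaJ_bracket
        omegaJ_sig_multiple) (simp_all add: assms)
  show ?thesis
    using omega_tensor.irreducible_iff_const[OF OI] omega_tensor.irreducible_iff_const[OF OJ] by simp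
qed

end
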